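(* Let $\mu<\lambda$ be infinite cardinals with $\mu^{<\mu}=\mu$ and $\lambda$ regular. Then the forcing notion $\mathbb P(\lambda,\mu)$ satisfies the $\mu^+$-chain condition.
   Context: Let $3$ denote the three-element set of symbols $\{\ge,\perp,u\}$. For a set $w$ of ordinals, $[w]^2=\{(i,j): i<j,\ i,j\in w\}$. A valuation function is a map $p:[w]^2\to 3$ such that: (1) if $i<j<k$ in $w$, $p(i,j)={\ge}$ and $p(j,k)={\ge}$, then $p(i,k)={\ge}$; (2) if $i<j<k$ in $w$ and $\{p(i,j),p(i,k)\}=\{\perp,\ge\}$ then $p(j,k)={\perp}$; and if $i<j<k$, $p(i,j)={\perp}$, $p(j,k)={\ge}$, then $p(i,k)={\perp}$. $\mathbb P(\lambda,\mu)$ is the set of valuation functions whose domain is a subset of $\lambda$ of cardinality less than $\mu$, ordered by reverse inclusion. *)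

theory Defs
  imports Main
begin

text \<open>The three-element set of symbols: Ge stands for the symbol greater-or-equal,
  Perp for perpendicular, U for u.\<close>
datatype sym3 = Ge | Perp | U

text \<open>Ordinals below lambda are the elements of a type carrying a cardinal order rl
  (so Field rl = UNIV); strict order i < j is (i,j) in rl and i different from j.\<close>
definition olt :: "'a rel \<Rightarrow> 'a \<Rightarrow> 'a \<Rightarrow> bool" where
  "olt r i j \<longleftrightarrow> (i, j) \<in> r \<and> i \<noteq> j"

definition pairs2 :: "'a rel \<Rightarrow> 'a set \<Rightarrow> ('a \<times> 'a) set" where
  "pairs2 r w = {(i, j). i \<in> w \<and> j \<in> w \<and> olt r i j}"

definition valuation :: "'a rel \<Rightarrow> 'a set \<Rightarrow> ('a \<times> 'a \<rightharpoonup> sym3) \<Rightarrow> bool" where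
  "valuation r w p \<longleftrightarrow> dom p = pairs2 r w \<and>
    (\<forall>i\<in>w. \<forall>j\<in>w. \<forall>k\<in>w. olt r i j \<and> olt r j k \<longrightarrow>
       (p (i, j) = Some Ge \<and> p (j, k) = Some Ge \<longrightarrow> p (i, k) = Some Ge) \<and>
       ({the (p (i, j)), the (p (i, k))} = {Perp, Ge} \<longrightarrow> p (j, k) = Some Perp) \<and>
       (p (i, j) = Some Perp \<and> p (j, k) = Some Ge \<longrightarrow> p (i, k) = Some Perp))"

text \<open>The forcing notion P(lambda, mu): valuation functions whose domain is [w]^2 for
  some w subset of lambda with |w| < mu. Ordered by reverse inclusion.\<close>
definition Pforce :: "'a rel \<Rightarrow> 'b rel \<Rightarrow> ('a \<times> 'a \<rightharpoonup> sym3) set" where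
  "Pforce rl rm = {p. \<exists>w. w \<subseteq> Field rl \<and> (card_of w, rm) \<in> ordLess \<and> valuation rl w p}"

definition compatible :: "('a \<times> 'a \<rightharpoonup> sym3) set \<Rightarrow> ('a \<times> 'a \<rightharpoonup> sym3) \<Rightarrow> ('a \<times> 'a \<rightharpoonup> sym3) \<Rightarrow> bool" where
  "compatible P p q \<longleftrightarrow> (\<exists>s\<in>P. p \<subseteq>\<^sub>m s \<and> q \<subseteq>\<^sub>m s)"

definition antichain :: "('a \<times> 'a \<rightharpoonup> sym3) set \<Rightarrow> ('a \<times> 'a \<rightharpoonup> sym3) set \<Rightarrow> bool" where
  "antichain P A \<longleftrightarrow> A \<subseteq> P \<and> (\<forall>p\<in>A. \<forall>q\<in>A. p \<noteq> q \<longrightarrow> \<not> compatible P p q)"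

definition chain_condition :: "('a \<times> 'a \<rightharpoonup> sym3) set \<Rightarrow> 'c rel \<Rightarrow> bool" where
  "chain_condition P kappa \<longleftrightarrow> (\<forall>A. antichain P A \<longrightarrow> (card_of A, kappa) \<in> ordLess)"

text \<open>mu^{<mu} as the cardinality of the union over ordinals alpha < mu of the
  function spaces alpha -> mu.\<close>
definition less_exp_set :: "'b rel \<Rightarrow> ('b \<Rightarrow> 'b) set" where
  "less_exp_set rm = (\<Union>a\<in>Field rm. Func (underS rm a) (Field rm))"

end

theory Submission
  imports Defs
begin

(* Two conditions p on [a]^2 and q on [b]^2 that agree on [a \<inter> b]^2 are compatible.
  Read a valuation as the transitive relation "Ge" together with the symmetric relation
  "Perp", which passes from a point to its Ge-successors.  On a \<union> b, close the union
  p ++ q under a single detour through a point of a \<inter> b: this is again transitive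
  resp. inherited along Ge, the two closures stay disjoint, and on pairs inside a or
  inside b they add nothing.  All remaining pairs get the value u.

  Hence an antichain is a family of partial functions with domains of size < mu and three
  values, no two of which agree on their common domain.  If mu^<mu = mu, then mu is regular
  and a closure argument along a chain of length mu shows that such a family has at most
  mu members. *)

section \<open>Valuations as relations\<close>

lemma card_order_olt_trans:
  assumes "card_order r" and "olt r x y" and "olt r y z"
  shows "olt r x z"
  using card_order_on_well_order_on[OF assms(1)] assms(2,3) unfolding olt_def
  by (auto simp: well_order_on_def linear_order_on_def partial_order_on_def
      preorder_on_def antisym_def trans_def)

lemma card_order_olt_asym:
  assumes "card_order r" and "olt r x y"
  shows "\<not> olt r y x"
  using card_order_on_well_order_on[OF assms(1)] assms(2) unfolding olt_def
  by (auto simp: well_order_on_def linear_order_on_def partial_order_on_def antisym_def)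

lemma olt_irrefl: "\<not> olt r x x"
  unfolding olt_def by simp

lemma card_order_olt_total:
  assumes "card_order r" and "x \<noteq> y"
  shows "olt r x y \<or> olt r y x"
  using card_order_on_well_order_on[OF assms(1)] assms(2) unfolding olt_def
  by (auto simp: well_order_on_def linear_order_on_def total_on_def)

definition ge_rel :: "('a \<times> 'a \<rightharpoonup> sym3) \<Rightarrow> 'a \<Rightarrow> 'a \<Rightarrow> bool" where
  "ge_rel f x y \<longleftrightarrow> f (x, y) = Some Ge"

definition perp_rel :: "('a \<times> 'a \<rightharpoonup> sym3) \<Rightarrow> 'a \<Rightarrow> 'a \<Rightarrow> bool" where
  "perp_rel f x y \<longleftrightarrow> f (x, y) = Some Perp \<or> f (y, x) = Some Perp"

lemma perp_rel_sym: "perp_rel f x y \<Longrightarrow> perp_rel f y x"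
  unfolding perp_rel_def by blast

lemma valuation_dom: "valuation r w f \<Longrightarrow> dom f = pairs2 r w"
  unfolding valuation_def by blast

lemma dom_pairs2_SomeD:
  assumes "dom f = pairs2 r w" and "f (x, y) = Some v"
  shows "x \<in> w" and "y \<in> w" and "olt r x y"
proof -
  have "(x, y) \<in> pairs2 r w" using assms by blast
  then show "x \<in> w" and "y \<in> w" and "olt r x y" unfolding pairs2_def by simp_all
qed

lemma dom_pairs2_None:
  assumes "card_order r" and "dom f = pairs2 r w" and "olt r y x"
  shows "f (x, y) = None"
proof (rule ccontr)
  assume "f (x, y) \<noteq> None"
  then obtain v where "f (x, y) = Some v" by blast
  then have "olt r x y" by (rule dom_pairs2_SomeD(3)[OF assms(2)])
  with card_order_olt_asym[OF assms(1)] assms(3) show False by blast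
qed

lemma dom_pairs2_perp_rel_iff:
  assumes "card_order r" and "dom f = pairs2 r w" and "olt r x y"
  shows "perp_rel f x y \<longleftrightarrow> f (x, y) = Some Perp"
  using dom_pairs2_None[OF assms] unfolding perp_rel_def by simp

lemma valuationD:
  assumes "valuation r w f" and "i \<in> w" "j \<in> w" "k \<in> w" and "olt r i j" "olt r j k"
  shows "f (i, j) = Some Ge \<Longrightarrow> f (j, k) = Some Ge \<Longrightarrow> f (i, k) = Some Ge"
    and "f (i, j) = Some Ge \<Longrightarrow> f (i, k) = Some Perp \<Longrightarrow> f (j, k) = Some Perp"
    and "f (i, j) = Some Perp \<Longrightarrow> f (i, k) = Some Ge \<Longrightarrow> f (j, k) = Some Perp"
    and "f (i, j) = Some Perp \<Longrightarrow> f (j, k) = Some Ge \<Longrightarrow> f (i, k) = Some Perp"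
proof -
  have conds: "(f (i, j) = Some Ge \<and> f (j, k) = Some Ge \<longrightarrow> f (i, k) = Some Ge) \<and>
      ({the (f (i, j)), the (f (i, k))} = {Perp, Ge} \<longrightarrow> f (j, k) = Some Perp) \<and>
      (f (i, j) = Some Perp \<and> f (j, k) = Some Ge \<longrightarrow> f (i, k) = Some Perp)"
    using assms unfolding valuation_def by blast
  show "f (i, j) = Some Ge \<Longrightarrow> f (j, k) = Some Ge \<Longrightarrow> f (i, k) = Some Ge"
    and "f (i, j) = Some Perp \<Longrightarrow> f (j, k) = Some Ge \<Longrightarrow> f (i, k) = Some Perp"
    using conds by blast+
  show "f (i, j) = Some Ge \<Longrightarrow> f (i, k) = Some Perp \<Longrightarrow> f (j, k) = Some Perp"
    and "f (i, j) = Some Perp \<Longrightarrow> f (i, k) = Some Ge \<Longrightarrow> f (j, k) = Some Perp"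
    using conds[THEN conjunct2, THEN conjunct1] by (simp_all add: insert_commute)
qed

lemma valuation_ge_rel_transp:
  assumes "valuation r w f"
  shows "transp (ge_rel f)"
proof (rule transpI)
  fix x y z assume "ge_rel f x y" "ge_rel f y z"
  then show "ge_rel f x z"
    using valuationD(1)[OF assms] dom_pairs2_SomeD[OF valuation_dom[OF assms]]
    unfolding ge_rel_def by metis
qed

lemma valuation_perp_rel_up:
  assumes r: "card_order r" and val: "valuation r w f"
    and uv: "perp_rel f u v" and uu': "ge_rel f u u'"
  shows "perp_rel f u' v"
proof -
  note dom = valuation_dom[OF val]
  have u: "u \<in> w" "u' \<in> w" "olt r u u'" and Ge: "f (u, u') = Some Ge"
    using uu' dom_pairs2_SomeD[OF dom] unfolding ge_rel_def by blast+
  have v: "v \<in> w" "v \<noteq> u"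
    using uv dom_pairs2_SomeD[OF dom] olt_irrefl unfolding perp_rel_def by metis+
  have "v \<noteq> u'"
    using uv Ge dom_pairs2_None[OF r dom u(3)] unfolding perp_rel_def by auto
  then consider "olt r v u" | "olt r u v" "olt r v u'" | "olt r u v" "olt r u' v"
    using card_order_olt_total[OF r] v(2) by blast
  then show ?thesis
  proof cases
    case 1
    then have "f (v, u) = Some Perp"
      using perp_rel_sym[OF uv] dom_pairs2_perp_rel_iff[OF r dom] by blast
    then show ?thesis
      using valuationD(4)[OF val v(1) u(1,2) 1 u(3)] Ge unfolding perp_rel_def by blast
  next
    case 2
    then have "f (u, v) = Some Perp" using uv dom_pairs2_perp_rel_iff[OF r dom] by blast
    then show ?thesis
      using valuationD(3)[OF val u(1) v(1) u(2) 2] Ge unfolding perp_rel_def by blast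
  next
    case 3
    then have "f (u, v) = Some Perp" using uv dom_pairs2_perp_rel_iff[OF r dom] by blast
    then show ?thesis
      using valuationD(2)[OF val u(1,2) v(1) u(3) 3(2)] Ge unfolding perp_rel_def by blast
  qed
qed

lemma valuationI_closed:
  assumes r: "card_order r" and dom: "dom f = pairs2 r w" and trans: "transp (ge_rel f)"
    and up: "\<And>u v u'. perp_rel f u v \<Longrightarrow> ge_rel f u u' \<Longrightarrow> perp_rel f u' v"
  shows "valuation r w f"
  unfolding valuation_def
proof (intro conjI[OF dom] ballI impI)
  fix i j k assume "i \<in> w" "j \<in> w" "k \<in> w" and ijk: "olt r i j \<and> olt r j k"
  then have ik: "olt r i k" using card_order_olt_trans[OF r] by blast
  have defined: "f (i, j) \<noteq> None" "f (i, k) \<noteq> None"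
    using \<open>i \<in> w\<close> \<open>j \<in> w\<close> \<open>k \<in> w\<close> ijk ik dom unfolding pairs2_def by blast+
  note perp_iff = dom_pairs2_perp_rel_iff[OF r dom]
  have "f (i, j) = Some Ge \<and> f (j, k) = Some Ge \<longrightarrow> f (i, k) = Some Ge"
    using trans unfolding ge_rel_def transp_def by blast
  moreover have "{the (f (i, j)), the (f (i, k))} = {Perp, Ge} \<longrightarrow> f (j, k) = Some Perp"
  proof
    assume "{the (f (i, j)), the (f (i, k))} = {Perp, Ge}"
    then consider "f (i, j) = Some Perp" "f (i, k) = Some Ge"
      | "f (i, j) = Some Ge" "f (i, k) = Some Perp"
      using defined by (auto simp: doubleton_eq_iff)
    then show "f (j, k) = Some Perp"
    proof cases
      case 1
      then show ?thesis
        using up[of i j k] perp_iff ijk perp_rel_sym unfolding ge_rel_def by metis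
    next
      case 2
      then show ?thesis using up[of i k j] perp_iff ijk ik unfolding ge_rel_def by metis
    qed
  qed
  moreover have "f (i, j) = Some Perp \<and> f (j, k) = Some Ge \<longrightarrow> f (i, k) = Some Perp"
    using up[of j i k] perp_iff ijk ik perp_rel_sym unfolding ge_rel_def by metis
  ultimately show "(f (i, j) = Some Ge \<and> f (j, k) = Some Ge \<longrightarrow> f (i, k) = Some Ge) \<and>
    ({the (f (i, j)), the (f (i, k))} = {Perp, Ge} \<longrightarrow> f (j, k) = Some Perp) \<and>
    (f (i, j) = Some Perp \<and> f (j, k) = Some Ge \<longrightarrow> f (i, k) = Some Perp)"
    by blast
qed

section \<open>Amalgamation of agreeing valuations\<close>

locale agreeing_valuations =
  fixes r :: "'a rel" and a b :: "'a set" and p q :: "'a \<times> 'a \<rightharpoonup> sym3"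
  assumes card_order: "card_order r"
    and valuation_p: "valuation r a p" and valuation_q: "valuation r b q"
    and agree: "\<forall>x\<in>dom p \<inter> dom q. p x = q x"
begin

abbreviation ge_pq :: "'a \<Rightarrow> 'a \<Rightarrow> bool" where
  "ge_pq \<equiv> ge_rel (p ++ q)"

abbreviation perp_pq :: "'a \<Rightarrow> 'a \<Rightarrow> bool" where
  "perp_pq \<equiv> perp_rel (p ++ q)"

definition same_side :: "'a \<Rightarrow> 'a \<Rightarrow> bool" where
  "same_side x y \<longleftrightarrow> x \<in> a \<and> y \<in> a \<or> x \<in> b \<and> y \<in> b"

lemma same_side_sym: "same_side x y \<Longrightarrow> same_side y x"
  unfolding same_side_def by blast

lemma same_side_inter: "m \<in> a \<inter> b \<Longrightarrow> y \<in> a \<union> b \<Longrightarrow> same_side m y \<and> same_side y m"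
  unfolding same_side_def by blast

lemma same_side_Un: "same_side x y \<Longrightarrow> x \<in> a \<union> b \<and> y \<in> a \<union> b"
  unfolding same_side_def by blast

lemmas dom_p = valuation_dom[OF valuation_p]
lemmas dom_q = valuation_dom[OF valuation_q]

lemma map_add_on_a:
  assumes "x \<in> a" and "y \<in> a"
  shows "(p ++ q) (x, y) = p (x, y)"
proof (cases "(x, y) \<in> dom q")
  case True
  then have "(x, y) \<in> dom p" using assms unfolding dom_p dom_q pairs2_def by blast
  with True agree show ?thesis by (auto simp: map_add_dom_app_simps)
qed (simp add: map_add_dom_app_simps)

lemma map_add_on_b:
  assumes "x \<in> b" and "y \<in> b"
  shows "(p ++ q) (x, y) = q (x, y)"
proof (cases "(x, y) \<in> dom q")
  case False
  then have "(x, y) \<notin> dom p" using assms unfolding dom_p dom_q pairs2_def by blast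
  with False show ?thesis by (simp add: map_add_dom_app_simps domIff)
qed (simp add: map_add_dom_app_simps)

lemma map_add_pq_SomeD:
  assumes "(p ++ q) (x, y) = Some v"
  shows "same_side x y" and "olt r x y"
proof -
  have "(x, y) \<in> pairs2 r a \<union> pairs2 r b"
    using assms dom_p dom_q by blast
  then show "same_side x y" and "olt r x y"
    unfolding pairs2_def same_side_def by auto
qed

lemma map_add_pq_None:
  assumes "olt r y x"
  shows "(p ++ q) (x, y) = None"
  using map_add_pq_SomeD(2)[of x y] card_order_olt_asym[OF card_order assms]
  by (cases "(p ++ q) (x, y)") auto

lemma ge_pqD:
  assumes "ge_pq x y"
  shows "same_side x y" and "olt r x y"
  using map_add_pq_SomeD[of x y Ge] assms unfolding ge_rel_def by simp_all

lemma perp_pqD: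
  assumes "perp_pq x y"
  shows "same_side x y" and "x \<noteq> y"
proof -
  from assms consider "(p ++ q) (x, y) = Some Perp" | "(p ++ q) (y, x) = Some Perp"
    unfolding perp_rel_def by blast
  then have "same_side x y \<and> (olt r x y \<or> olt r y x)"
  proof cases
    case 1
    then show ?thesis using map_add_pq_SomeD[OF 1] by blast
  next
    case 2
    then show ?thesis using map_add_pq_SomeD[OF 2] same_side_sym by blast
  qed
  then show "same_side x y" and "x \<noteq> y" by (auto simp: olt_irrefl)
qed

lemma ge_pq_not_perp_pq:
  assumes "ge_pq x y"
  shows "\<not> perp_pq x y"
proof -
  have "(p ++ q) (y, x) = None" by (rule map_add_pq_None[OF ge_pqD(2)[OF assms]])
  with assms show ?thesis unfolding ge_rel_def perp_rel_def by (simp del: map_add_None)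
qed

lemma closed_within_side:
  assumes "x \<in> a \<and> y \<in> a \<and> z \<in> a \<or> x \<in> b \<and> y \<in> b \<and> z \<in> b"
  shows "ge_pq x y \<Longrightarrow> ge_pq y z \<Longrightarrow> ge_pq x z"
    and "perp_pq x z \<Longrightarrow> ge_pq x y \<Longrightarrow> perp_pq y z"
proof -
  have "ge_pq x y = ge_rel p x y \<and> perp_pq x y = perp_rel p x y" if "x \<in> a" "y \<in> a" for x y
    using that unfolding ge_rel_def perp_rel_def by (simp add: map_add_on_a)
  moreover have "ge_pq x y = ge_rel q x y \<and> perp_pq x y = perp_rel q x y" if "x \<in> b" "y \<in> b" for x y
    using that unfolding ge_rel_def perp_rel_def by (simp add: map_add_on_b)
  ultimately show "ge_pq x y \<Longrightarrow> ge_pq y z \<Longrightarrow> ge_pq x z"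
    and "perp_pq x z \<Longrightarrow> ge_pq x y \<Longrightarrow> perp_pq y z"
    using assms valuation_ge_rel_transp[OF valuation_p] valuation_ge_rel_transp[OF valuation_q]
      valuation_perp_rel_up[OF card_order valuation_p] valuation_perp_rel_up[OF card_order valuation_q]
    by (auto dest: transpD)
qed

lemma ge_pq_trans:
  assumes "ge_pq x y" and "ge_pq y z" and "same_side x z"
  shows "ge_pq x z"
  using ge_pqD(1)[OF assms(1)] ge_pqD(1)[OF assms(2)] assms closed_within_side(1)
  unfolding same_side_def by blast

lemma perp_pq_up:
  assumes "perp_pq u v" and "ge_pq u u'" and "same_side u' v"
  shows "perp_pq u' v"
  using perp_pqD(1)[OF assms(1)] ge_pqD(1)[OF assms(2)] assms closed_within_side(2)
  unfolding same_side_def by blast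

lemma ge_pq_trans_through_inter:
  assumes "ge_pq x y" and "ge_pq y z" and "x \<in> a \<inter> b \<or> z \<in> a \<inter> b"
  shows "ge_pq x z"
  using assms ge_pq_trans ge_pqD(1) same_side_inter same_side_Un by metis

lemma perp_pq_up_through_inter:
  assumes "perp_pq u v" and "ge_pq u u'" and "u' \<in> a \<inter> b \<or> v \<in> a \<inter> b"
  shows "perp_pq u' v"
  using assms perp_pq_up ge_pqD(1) perp_pqD(1) same_side_inter same_side_Un by metis

(* A chain of Ge-steps can pass between a - b and b - a only through a \<inter> b, and one
  detour through a \<inter> b suffices (ge_closure_trans, perp_closure_up). *)
definition ge_closure :: "'a \<Rightarrow> 'a \<Rightarrow> bool" where
  "ge_closure x y \<longleftrightarrow> ge_pq x y \<or> (\<exists>m\<in>a \<inter> b. ge_pq x m \<and> ge_pq m y)"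

definition perp_closure :: "'a \<Rightarrow> 'a \<Rightarrow> bool" where
  "perp_closure x y \<longleftrightarrow>
    perp_pq x y \<or> (\<exists>m\<in>a \<inter> b. ge_pq m x \<and> perp_pq m y \<or> ge_pq m y \<and> perp_pq m x)"

lemma ge_closureD:
  assumes "ge_closure x y"
  shows "x \<in> a \<union> b \<and> y \<in> a \<union> b \<and> olt r x y"
proof -
  from assms consider "ge_pq x y" | m where "ge_pq x m" "ge_pq m y"
    unfolding ge_closure_def by blast
  then show ?thesis
  proof cases
    case 1
    then show ?thesis using ge_pqD same_side_Un by blast
  next
    case 2
    have "olt r x y"
      using card_order_olt_trans[OF card_order ge_pqD(2)[OF 2(1)] ge_pqD(2)[OF 2(2)]] .
    then show ?thesis using ge_pqD(1)[OF 2(1)] ge_pqD(1)[OF 2(2)] same_side_Un by blast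
  qed
qed

lemma ge_closure_trans:
  assumes xy: "ge_closure x y" and yz: "ge_closure y z"
  shows "ge_closure x z"
proof -
  consider (direct) "ge_pq x y" "ge_pq y z"
    | (left) m where "m \<in> a \<inter> b" "ge_pq x m" "ge_pq m y"
    | (right) m where "m \<in> a \<inter> b" "ge_pq x y" "ge_pq y m" "ge_pq m z"
    using xy yz unfolding ge_closure_def by blast
  then show ?thesis
  proof cases
    case direct
    show ?thesis
    proof (cases "same_side x z")
      case True
      then show ?thesis using direct ge_pq_trans unfolding ge_closure_def by blast
    next
      case False
      then have "y \<in> a \<inter> b" using direct ge_pqD(1) unfolding same_side_def by blast
      then show ?thesis using direct unfolding ge_closure_def by blast
    qed
  next
    case left
    have "ge_pq m z"
      using yz left(1,3) ge_pq_trans_through_inter unfolding ge_closure_def by metis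
    then show ?thesis using left(1,2) unfolding ge_closure_def by blast
  next
    case right
    then show ?thesis using ge_pq_trans_through_inter unfolding ge_closure_def by blast
  qed
qed

lemma perp_closure_sym: "perp_closure x y \<Longrightarrow> perp_closure y x"
  unfolding perp_closure_def using perp_rel_sym[of "p ++ q" x y] by auto

lemma perp_closureD:
  assumes "perp_closure x y"
  shows "x \<in> a \<union> b \<and> y \<in> a \<union> b"
proof -
  from assms consider "perp_pq x y" | m where "ge_pq m x" "perp_pq m y"
    | m where "ge_pq m y" "perp_pq m x"
    unfolding perp_closure_def by blast
  then show ?thesis
    using ge_pqD(1) perp_pqD(1) same_side_Un by cases blast+
qed

lemma perp_closure_up_from_perp_pq:
  assumes xy: "perp_pq x y" and xx': "ge_closure x x'"
  shows "perp_closure x' y"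
proof -
  from xx' consider "ge_pq x x'" | m where "m \<in> a \<inter> b" "ge_pq x m" "ge_pq m x'"
    unfolding ge_closure_def by blast
  then show ?thesis
  proof cases
    case 1
    show ?thesis
    proof (cases "same_side x' y")
      case True
      then show ?thesis using perp_pq_up[OF xy 1 True] unfolding perp_closure_def by blast
    next
      case False
      then have "x \<in> a \<inter> b"
        using ge_pqD(1)[OF 1] perp_pqD(1)[OF xy] unfolding same_side_def by blast
      then show ?thesis using xy 1 unfolding perp_closure_def by blast
    qed
  next
    case 2
    have "perp_pq m y" using perp_pq_up_through_inter[OF xy 2(2)] 2(1) by blast
    then show ?thesis using 2(1,3) unfolding perp_closure_def by blast
  qed
qed

lemma perp_closure_up_from_below:
  assumes m: "m \<in> a \<inter> b" and my: "ge_pq m y" and mx: "perp_pq m x"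
    and xx': "ge_closure x x'"
  shows "perp_closure x' y"
proof -
  have "perp_pq x m" using perp_rel_sym[OF mx] .
  from xx' consider "ge_pq x x'" | m' where "m' \<in> a \<inter> b" "ge_pq x m'" "ge_pq m' x'"
    unfolding ge_closure_def by blast
  then show ?thesis
  proof cases
    case 1
    have "perp_pq x' m" using perp_pq_up_through_inter[OF \<open>perp_pq x m\<close> 1] m by blast
    then have "perp_pq m x'" by (rule perp_rel_sym)
    then show ?thesis using m my unfolding perp_closure_def by blast
  next
    case 2
    have "perp_pq m' m" using perp_pq_up_through_inter[OF \<open>perp_pq x m\<close> 2(2)] 2(1) by blast
    then have "perp_pq y m'"
      using perp_pq_up_through_inter[OF perp_rel_sym[OF \<open>perp_pq m' m\<close>] my] 2(1) by blast
    then have "perp_pq m' y" by (rule perp_rel_sym)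
    then show ?thesis using 2(1,3) unfolding perp_closure_def by blast
  qed
qed

lemma perp_closure_up:
  assumes xy: "perp_closure x y" and xx': "ge_closure x x'"
  shows "perp_closure x' y"
proof -
  consider "perp_pq x y" | m where "m \<in> a \<inter> b" "ge_pq m x" "perp_pq m y"
    | m where "m \<in> a \<inter> b" "ge_pq m y" "perp_pq m x"
    using xy unfolding perp_closure_def by blast
  then show ?thesis
  proof cases
    case 1
    then show ?thesis using xx' by (rule perp_closure_up_from_perp_pq)
  next
    case 2
    have "ge_closure m x" using 2(2) unfolding ge_closure_def by blast
    then have "ge_closure m x'" using xx' by (rule ge_closure_trans)
    with 2(3) show ?thesis by (rule perp_closure_up_from_perp_pq)
  next
    case 3
    then show ?thesis using xx' by (rule perp_closure_up_from_below)
  qed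
qed

lemma perp_closure_irrefl: "\<not> perp_closure x x"
  unfolding perp_closure_def using perp_pqD(2) ge_pq_not_perp_pq by blast

lemma ge_closure_not_perp_closure: "ge_closure x y \<Longrightarrow> \<not> perp_closure x y"
  using perp_closure_up perp_closure_irrefl by blast

lemma ge_closure_same_side: "same_side x y \<Longrightarrow> ge_closure x y \<longleftrightarrow> ge_pq x y"
  unfolding ge_closure_def using ge_pq_trans by blast

lemma perp_closure_same_side:
  assumes "same_side x y"
  shows "perp_closure x y \<longleftrightarrow> perp_pq x y"
proof
  assume "perp_closure x y"
  then consider "perp_pq x y" | m where "ge_pq m x" "perp_pq m y"
    | m where "ge_pq m y" "perp_pq m x"
    unfolding perp_closure_def by blast
  then show "perp_pq x y"
  proof cases
    case 2
    show ?thesis using perp_pq_up[OF 2(2,1) assms] .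
  next
    case 3
    have "perp_pq y x" using perp_pq_up[OF 3(2,1) same_side_sym[OF assms]] .
    then show ?thesis by (rule perp_rel_sym)
  qed
qed (simp add: perp_closure_def)

definition amalgam :: "'a \<times> 'a \<rightharpoonup> sym3" where
  "amalgam = (\<lambda>(x, y). if x \<in> a \<union> b \<and> y \<in> a \<union> b \<and> olt r x y
     then Some (if perp_closure x y then Perp else if ge_closure x y then Ge else U) else None)"

lemma dom_amalgam: "dom amalgam = pairs2 r (a \<union> b)"
  unfolding amalgam_def pairs2_def dom_def by (auto split: if_splits)

lemma ge_rel_amalgam: "ge_rel amalgam = ge_closure"
  unfolding ge_rel_def amalgam_def using ge_closureD ge_closure_not_perp_closure
  by (auto intro!: ext)

lemma perp_rel_amalgam: "perp_rel amalgam = perp_closure"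
proof (intro ext iffI)
  fix x y assume "perp_closure x y"
  moreover have "x \<noteq> y" using perp_closure_irrefl \<open>perp_closure x y\<close> by metis
  then have "olt r x y \<or> olt r y x" using card_order_olt_total[OF card_order] by blast
  ultimately show "perp_rel amalgam x y"
    using perp_closureD perp_closure_sym unfolding perp_rel_def amalgam_def by auto
qed (auto simp: perp_rel_def amalgam_def perp_closure_sym split: if_splits)

lemma valuation_amalgam: "valuation r (a \<union> b) amalgam"
  using card_order dom_amalgam
  by (rule valuationI_closed)
    (auto simp: ge_rel_amalgam perp_rel_amalgam intro: transpI ge_closure_trans perp_closure_up)

lemma amalgam_same_side:
  assumes "same_side x y" and "olt r x y"
  shows "amalgam (x, y) = (p ++ q) (x, y)"
proof -
  have in_Un: "x \<in> a \<union> b" "y \<in> a \<union> b" using same_side_Un[OF assms(1)] by blast+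
  have "(x, y) \<in> pairs2 r a \<union> pairs2 r b"
    using assms unfolding same_side_def pairs2_def by blast
  then have "(x, y) \<in> dom (p ++ q)" by (auto simp: dom_p dom_q)
  then obtain v where v: "(p ++ q) (x, y) = Some v" by (meson domD)
  have "perp_closure x y \<longleftrightarrow> v = Perp"
    using perp_closure_same_side[OF assms(1)] map_add_pq_None[OF assms(2)] v
    unfolding perp_rel_def by auto
  moreover have "ge_closure x y \<longleftrightarrow> v = Ge"
    using ge_closure_same_side[OF assms(1)] v unfolding ge_rel_def by auto
  ultimately show ?thesis
    using in_Un assms(2) v unfolding amalgam_def by (cases v) auto
qed

lemma map_add_le_amalgam: "p ++ q \<subseteq>\<^sub>m amalgam"
  unfolding map_le_def
proof
  fix z assume "z \<in> dom (p ++ q)"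
  then obtain v where v: "(p ++ q) z = Some v" by (meson domD)
  obtain x y where z: "z = (x, y)" by (cases z)
  show "(p ++ q) z = amalgam z"
    using amalgam_same_side[OF map_add_pq_SomeD[OF v[unfolded z]]] unfolding z by simp
qed

lemma p_le_map_add: "p \<subseteq>\<^sub>m p ++ q"
  unfolding map_le_def
proof
  fix z assume "z \<in> dom p"
  then obtain x y where "z = (x, y)" "x \<in> a" "y \<in> a" unfolding dom_p pairs2_def by blast
  then show "p z = (p ++ q) z" using map_add_on_a by simp
qed

lemma common_extension: "\<exists>s. valuation r (a \<union> b) s \<and> p \<subseteq>\<^sub>m s \<and> q \<subseteq>\<^sub>m s"
  using valuation_amalgam map_le_trans[OF p_le_map_add map_add_le_amalgam]
    map_le_trans[OF map_le_map_add map_add_le_amalgam] by blast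

end

section \<open>Cardinal arithmetic under mu^<mu = mu\<close>

unbundle cardinal_syntax

lemma card_of_Field_ordLeq: "Card_order r \<Longrightarrow> |Field r| \<le>o r"
  using card_of_Field_ordIso ordIso_imp_ordLeq by blast

lemma ordLess_ordIso_underS:
  assumes r: "Card_order r" and A: "|A| <o r"
  obtains x where "x \<in> Field r" and "|underS r x| =o |A|"
proof -
  have wo: "Well_order r" using r by (rule card_order_on_well_order_on)
  obtain x where x: "x \<in> Field r" and iso: "|A| =o Restr r (underS r x)"
    using iffD1[OF ordLess_iff_ordIso_Restr[OF wo card_of_Well_order] A] by (rule bexE)
  have "wo_rel.ofilter r (underS r x)"
    using wo_rel.underS_ofilter[of r x] wo unfolding wo_rel_def by simp
  then have "Field (Restr r (underS r x)) = underS r x"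
    using Field_Restr_ofilter[OF wo] by simp
  then have "|A| =o |underS r x|" using card_of_cong[OF iso] by (simp add: Field_card_of)
  with x show ?thesis using that ordIso_symmetric by blast
qed

lemma small_set_misses_Field:
  assumes "Card_order r" and "|A| <o r"
  shows "\<exists>x\<in>Field r. x \<notin> A"
proof (rule ccontr)
  assume "\<not> (\<exists>x\<in>Field r. x \<notin> A)"
  then have "|Field r| \<le>o |A|" by (intro card_of_mono1) blast
  then have "|Field r| <o r" using assms(2) by (rule ordLeq_ordLess_trans)
  then show False using not_ordLess_ordIso card_of_Field_ordIso[OF assms(1)] by blast
qed

lemma card_of_under_ordLess:
  assumes r: "Card_order r" "\<not> finite (Field r)" and x: "x \<in> Field r"
  shows "|under r x| <o r"
proof -
  have "under r x \<subseteq> {x} \<union> underS r x" unfolding under_def underS_def by blast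
  moreover have "|{x}| <o r"
    by (rule finite_ordLess_infinite[OF card_of_Well_order card_order_on_well_order_on[OF r(1)]])
      (simp_all add: Field_card_of r(2))
  then have "|{x} \<union> underS r x| <o r"
    using card_of_Un_ordLess_infinite_Field[OF r(2,1)] card_of_underS[OF r(1) x] by blast
  ultimately show ?thesis using card_of_mono1 ordLeq_ordLess_trans by blast
qed

lemma card_of_Func_ordLeq:
  assumes r: "Card_order r" and exp: "|less_exp_set r| \<le>o r"
    and K: "|K| <o r" and V: "|V| \<le>o r"
  shows "|Func K V| \<le>o r"
proof -
  obtain x where x: "x \<in> Field r" "|underS r x| =o |K|"
    using ordLess_ordIso_underS[OF r K] .
  have "|Func K V| \<le>o r ^c |K|"
    using cexp_mono1[OF V card_of_Card_order] unfolding cexp_def by (simp add: Field_card_of)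
  also have "r ^c |K| =o |Func (underS r x) (Field r)|"
    using cexp_cong2[OF ordIso_symmetric[OF x(2)] r card_of_Card_order]
    unfolding cexp_def[of r "|underS r x|"] by (simp add: Field_card_of)
  finally have "|Func K V| \<le>o |Func (underS r x) (Field r)|" .
  also have "|Func (underS r x) (Field r)| \<le>o |less_exp_set r|"
    using x(1) unfolding less_exp_set_def by (intro card_of_mono1) blast
  finally show ?thesis using exp by (rule ordLeq_transitive)
qed

lemma card_of_small_subsets_ordLeq:
  assumes r: "Card_order r" "\<not> finite (Field r)" and exp: "|less_exp_set r| \<le>o r"
    and X: "|X| \<le>o r"
  shows "|{A. A \<subseteq> X \<and> |A| <o r}| \<le>o r"
proof -
  let ?images = "\<lambda>x. (\<lambda>f. f ` underS r x) ` Func (underS r x) X"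
  have "{A. A \<subseteq> X \<and> |A| <o r} \<subseteq> (\<Union>x\<in>Field r. ?images x)"
  proof safe
    fix A assume AX: "A \<subseteq> X" and A: "|A| <o r"
    obtain x where x: "x \<in> Field r" "|underS r x| =o |A|"
      using ordLess_ordIso_underS[OF r(1) A] .
    then obtain f where f: "bij_betw f (underS r x) A" by (auto simp: card_of_ordIso[symmetric])
    define g where "g z = (if z \<in> underS r x then f z else undefined)" for z
    have "g \<in> Func (underS r x) X" and "g ` underS r x = A"
      using f AX unfolding g_def Func_def bij_betw_def by auto
    with x(1) show "A \<in> (\<Union>x\<in>Field r. ?images x)" by blast
  qed
  then have "|{A. A \<subseteq> X \<and> |A| <o r}| \<le>o |\<Union>x\<in>Field r. ?images x|"
    by (rule card_of_mono1)
  also have "|\<Union>x\<in>Field r. ?images x| \<le>o r"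
  proof (rule card_of_UNION_ordLeq_infinite_Field[OF r(2,1) card_of_Field_ordLeq[OF r(1)]],
      intro ballI)
    fix x assume "x \<in> Field r"
    have "|?images x| \<le>o |Func (underS r x) X|" by (rule card_of_image)
    also have "|Func (underS r x) X| \<le>o r"
      by (rule card_of_Func_ordLeq[OF r(1) exp card_of_underS[OF r(1) \<open>x \<in> Field r\<close>] X])
    finally show "|?images x| \<le>o r" .
  qed
  finally show ?thesis .
qed

lemma inj_graph: "inj Map.graph"
proof (rule injI)
  fix g h :: "'a \<rightharpoonup> 'b" assume "Map.graph g = Map.graph h"
  then show "g = h" by (metis in_graphD in_graphI map_le_antisym map_le_def domD)
qed

lemma card_of_small_partial_maps_ordLeq:
  fixes r :: "'b rel"
  assumes r: "Card_order r" "\<not> finite (Field r)" and exp: "|less_exp_set r| \<le>o r"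
    and S: "|S| \<le>o r" and V: "|UNIV :: 'v set| \<le>o r"
  shows "|{g :: 'y \<rightharpoonup> 'v. dom g \<subseteq> S \<and> |dom g| <o r}| \<le>o r"
    (is "|?M| \<le>o r")
proof -
  let ?small = "{A. A \<subseteq> S \<times> (UNIV :: 'v set) \<and> |A| <o r}"
  have graphs: "Map.graph ` ?M \<subseteq> ?small"
  proof safe
    fix g :: "'y \<rightharpoonup> 'v" and x v assume "dom g \<subseteq> S" and "(x, v) \<in> Map.graph g"
    then show "x \<in> S" by (auto dest: in_graphD)
  next
    fix g :: "'y \<rightharpoonup> 'v" assume small: "|dom g| <o r"
    have "bij_betw fst (Map.graph g) (dom g)"
      by (simp add: bij_betw_def inj_on_fst_graph fst_graph_eq_dom)
    then have "|Map.graph g| =o |dom g|" by (rule card_of_ordIso[THEN iffD1, OF exI])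
    then show "|Map.graph g| <o r" using small by (rule ordIso_ordLess_trans)
  qed (rule UNIV_I)
  have "inj_on Map.graph ?M" using inj_graph by (rule inj_on_subset) simp
  then have "|?M| \<le>o |Map.graph ` ?M|"
    by (intro card_of_ordLeq[THEN iffD1] exI[of _ Map.graph]) simp
  also have "|Map.graph ` ?M| \<le>o |?small|" using graphs by (rule card_of_mono1)
  also have "|?small| \<le>o r"
    by (rule card_of_small_subsets_ordLeq[OF r exp card_of_Times_ordLeq_infinite_Field[OF r(2) S V r(1)]])
  finally show ?thesis .
qed

(* Koenig: a cofinal K with |K| < mu would give |Func K mu| \<le> mu, and diagonalising along K
  against an enumeration of Func K mu by mu produces a function missing from it. *)
lemma regularCard_if_less_exp:
  assumes r: "Card_order r" "\<not> finite (Field r)" and exp: "|less_exp_set r| \<le>o r"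
  shows "regularCard r"
  unfolding regularCard_def
proof (intro allI impI)
  fix K assume K: "K \<subseteq> Field r \<and> cofinal K r"
  have "|K| \<le>o r"
    using card_of_mono1[of K "Field r"] K card_of_Field_ordLeq[OF r(1)]
    by (blast intro: ordLeq_transitive)
  moreover have "\<not> |K| <o r"
  proof
    assume small: "|K| <o r"
    let ?F = "Func K (Field r)"
    have "|?F| \<le>o |Field r|"
      using card_of_Func_ordLeq[OF r(1) exp small card_of_Field_ordLeq[OF r(1)]]
        ordIso_symmetric[OF card_of_Field_ordIso[OF r(1)]] by (rule ordLeq_ordIso_trans)
    then obtain e where e: "inj_on e ?F" "e ` ?F \<subseteq> Field r"
      by (auto simp: card_of_ordLeq[symmetric])
    define used where "used k = (\<lambda>h. h k) ` {h \<in> ?F. (e h, k) \<in> r}" for k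
    have fresh: "\<exists>v\<in>Field r. v \<notin> used k" if "k \<in> Field r" for k
    proof (rule small_set_misses_Field[OF r(1)])
      have "|{h \<in> ?F. (e h, k) \<in> r}| \<le>o |under r k|"
        using e(1) by (intro card_of_ordLeq[THEN iffD1] exI[of _ e])
          (auto simp: under_def intro: inj_on_subset)
      then have "|{h \<in> ?F. (e h, k) \<in> r}| <o r"
        using card_of_under_ordLess[OF r that] by (rule ordLeq_ordLess_trans)
      then show "|used k| <o r" unfolding used_def by (rule ordLeq_ordLess_trans[OF card_of_image])
    qed
    have "\<forall>k\<in>K. \<exists>v. v \<in> Field r \<and> v \<notin> used k" using K fresh by blast
    then obtain d where d: "\<forall>k\<in>K. d k \<in> Field r \<and> d k \<notin> used k"
      by (rule bchoice[THEN exE])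
    define d' where "d' k = (if k \<in> K then d k else undefined)" for k
    have "d' \<in> ?F" using d unfolding d'_def Func_def by simp
    then obtain k where k: "k \<in> K" "(e d', k) \<in> r"
      using K e(2) unfolding cofinal_def by blast
    then have "d' k \<in> used k" using \<open>d' \<in> ?F\<close> unfolding used_def by blast
    then show False using d k(1) unfolding d'_def by simp
  qed
  ultimately show "|K| =o r"
    using ordLeq_iff_ordLess_or_ordIso by blast
qed

section \<open>Agreeing members of large families of partial maps\<close>

lemma card_of_restrictions_ordLeq:
  fixes F :: "('y \<rightharpoonup> 'v) set" and r :: "'b rel"
  assumes r: "Card_order r" "\<not> finite (Field r)" and exp: "|less_exp_set r| \<le>o r"
    and V: "|UNIV :: 'v set| \<le>o r" and small: "\<And>f. f \<in> F \<Longrightarrow> |dom f| <o r"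
    and S: "|S| \<le>o r"
  shows "|(\<lambda>f. f |` S) ` F| \<le>o r"
proof -
  have "(\<lambda>f. f |` S) ` F \<subseteq> {g. dom g \<subseteq> S \<and> |dom g| <o r}"
  proof safe
    fix f assume "f \<in> F"
    have "|dom (f |` S)| \<le>o |dom f|" by (intro card_of_mono1) auto
    then show "|dom (f |` S)| <o r" using small[OF \<open>f \<in> F\<close>] by (rule ordLeq_ordLess_trans)
  qed (auto simp: restrict_map_def split: if_splits)
  then have "|(\<lambda>f. f |` S) ` F| \<le>o |{g :: 'y \<rightharpoonup> 'v. dom g \<subseteq> S \<and> |dom g| <o r}|"
    by (rule card_of_mono1)
  also have "|{g :: 'y \<rightharpoonup> 'v. dom g \<subseteq> S \<and> |dom g| <o r}| \<le>o r"
    by (rule card_of_small_partial_maps_ordLeq[OF r exp S V])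
  finally show ?thesis .
qed

lemma exists_closure_chain:
  fixes r :: "'b rel" and \<Phi> :: "'y set \<Rightarrow> 'y set"
  assumes r: "Card_order r" "\<not> finite (Field r)"
    and extensive: "\<And>S. S \<subseteq> \<Phi> S" and bounded: "\<And>S. |S| \<le>o r \<Longrightarrow> |\<Phi> S| \<le>o r"
  obtains B where "\<And>x. B x = \<Phi> (\<Union>y\<in>underS r x. B y)"
    and "\<And>x. x \<in> Field r \<Longrightarrow> |B x| \<le>o r" and "relChain r B"
proof -
  have wo: "wo_rel r" unfolding wo_rel_def using r(1) by (rule card_order_on_well_order_on)
  let ?H = "\<lambda>B x. \<Phi> (\<Union>y\<in>underS r x. B y)"
  define B where "B = wo_rel.worec r ?H"
  have "wo_rel.adm_wo r ?H"
    unfolding wo_rel.adm_wo_def[OF wo] by (metis (no_types, lifting) SUP_cong)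
  then have "B = ?H B" unfolding B_def by (rule wo_rel.worec_fixpoint[OF wo])
  then have B: "B x = \<Phi> (\<Union>y\<in>underS r x. B y)" for x by (rule fun_cong)
  have "x \<in> Field r \<longrightarrow> |B x| \<le>o r" for x
  proof (induction x rule: wo_rel.well_order_induct[OF wo])
    case (1 x)
    show ?case
    proof
      assume x: "x \<in> Field r"
      have "\<forall>y\<in>underS r x. |B y| \<le>o r"
        using 1 underS_Field[of _ r x] unfolding underS_def by blast
      then have "|\<Union>y\<in>underS r x. B y| \<le>o r"
        using card_of_UNION_ordLeq_infinite_Field[OF r(2,1)]
          ordLess_imp_ordLeq[OF card_of_underS[OF r(1) x]] by blast
      then show "|B x| \<le>o r" unfolding B[of x] by (rule bounded)
    qed
  qed
  moreover have "relChain r B"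
    unfolding relChain_def
  proof (intro allI impI)
    fix i j assume "(i, j) \<in> r"
    then have "i = j \<or> i \<in> underS r j" unfolding underS_def by blast
    then show "B i \<subseteq> B j" using extensive B[of j] by blast
  qed
  ultimately show thesis using that B by blast
qed

lemma exists_restriction_witness_closure:
  fixes F :: "('y \<rightharpoonup> 'v) set" and r :: "'b rel"
  assumes r: "Card_order r" "\<not> finite (Field r)" and exp: "|less_exp_set r| \<le>o r"
    and V: "|UNIV :: 'v set| \<le>o r" and small: "\<And>f. f \<in> F \<Longrightarrow> |dom f| <o r"
  obtains \<Phi> :: "'y set \<Rightarrow> 'y set" where "\<And>S. S \<subseteq> \<Phi> S"
    and "\<And>S. |S| \<le>o r \<Longrightarrow> |\<Phi> S| \<le>o r"
    and "\<And>S f. f \<in> F \<Longrightarrow> \<exists>f'\<in>F. dom f' \<subseteq> \<Phi> S \<and> f' |` S = f |` S"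
proof -
  let ?restr = "\<lambda>S. (\<lambda>f. f |` S) ` F"
  define wit where "wit S g = (SOME f. f \<in> F \<and> f |` S = g)" for S g
  have wit: "wit S g \<in> F \<and> wit S g |` S = g" if "g \<in> ?restr S" for S g
  proof -
    have "\<exists>f. f \<in> F \<and> f |` S = g" using that by blast
    then show ?thesis unfolding wit_def by (rule someI_ex)
  qed
  define \<Phi> where "\<Phi> S = S \<union> (\<Union>g\<in>?restr S. dom (wit S g))" for S
  have "S \<subseteq> \<Phi> S" for S unfolding \<Phi>_def by blast
  moreover have "|\<Phi> S| \<le>o r" if S: "|S| \<le>o r" for S
  proof -
    have "|?restr S| \<le>o r" using r exp V small S by (rule card_of_restrictions_ordLeq)
    moreover have "\<forall>g\<in>?restr S. |dom (wit S g)| \<le>o r"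
    proof
      fix g assume "g \<in> ?restr S"
      then have "wit S g \<in> F" using wit by blast
      then show "|dom (wit S g)| \<le>o r" by (rule ordLess_imp_ordLeq[OF small])
    qed
    ultimately have "|\<Union>g\<in>?restr S. dom (wit S g)| \<le>o r"
      by (rule card_of_UNION_ordLeq_infinite_Field[OF r(2,1)])
    then show ?thesis unfolding \<Phi>_def by (rule card_of_Un_ordLeq_infinite_Field[OF r(2) S _ r(1)])
  qed
  moreover have "\<exists>f'\<in>F. dom f' \<subseteq> \<Phi> S \<and> f' |` S = f |` S" if "f \<in> F" for S f
  proof -
    have "f |` S \<in> ?restr S" using that by blast
    then show ?thesis using wit unfolding \<Phi>_def by blast
  qed
  ultimately show thesis by (rule that)
qed

lemma exists_restriction_closed_chain:
  fixes F :: "('y \<rightharpoonup> 'v) set" and r :: "'b rel"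
  assumes r: "Card_order r" "\<not> finite (Field r)" and exp: "|less_exp_set r| \<le>o r"
    and V: "|UNIV :: 'v set| \<le>o r" and small: "\<And>f. f \<in> F \<Longrightarrow> |dom f| <o r"
  obtains B :: "'b \<Rightarrow> 'y set" where "relChain r B" and "|\<Union>x\<in>Field r. B x| \<le>o r"
    and "\<And>c f. f \<in> F \<Longrightarrow> \<exists>f'\<in>F. dom f' \<subseteq> B c \<and>
      f' |` (\<Union>y\<in>underS r c. B y) = f |` (\<Union>y\<in>underS r c. B y)"
proof -
  obtain \<Phi> :: "'y set \<Rightarrow> 'y set" where extensive: "\<And>S. S \<subseteq> \<Phi> S"
    and bounded: "\<And>S. |S| \<le>o r \<Longrightarrow> |\<Phi> S| \<le>o r"
    and witness: "\<And>S f. f \<in> F \<Longrightarrow> \<exists>f'\<in>F. dom f' \<subseteq> \<Phi> S \<and> f' |` S = f |` S"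
    using exists_restriction_witness_closure[OF r exp V small] by blast
  obtain B where B: "\<And>x. B x = \<Phi> (\<Union>y\<in>underS r x. B y)"
    and B_card: "\<And>x. x \<in> Field r \<Longrightarrow> |B x| \<le>o r" and chain: "relChain r B"
    using exists_closure_chain[OF r extensive bounded] by blast
  have card_union: "|\<Union>x\<in>Field r. B x| \<le>o r"
    by (rule card_of_UNION_ordLeq_infinite_Field[OF r(2,1) card_of_Field_ordLeq[OF r(1)]])
      (use B_card in blast)
  show thesis
  proof (rule that[OF chain card_union])
    fix c f assume "f \<in> F"
    then show "\<exists>f'\<in>F. dom f' \<subseteq> B c \<and>
        f' |` (\<Union>y\<in>underS r c. B y) = f |` (\<Union>y\<in>underS r c. B y)"
      unfolding B[of c] by (rule witness)
  qed
qed

lemma exists_dom_not_subset: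
  fixes F :: "('y \<rightharpoonup> 'v) set" and r :: "'b rel"
  assumes r: "Card_order r" "\<not> finite (Field r)" and exp: "|less_exp_set r| \<le>o r"
    and V: "|UNIV :: 'v set| \<le>o r"
    and small: "\<And>f. f \<in> F \<Longrightarrow> |dom f| <o r" and big: "r <o |F|"
    and W: "|W| \<le>o r"
  shows "\<exists>f\<in>F. \<not> dom f \<subseteq> W"
proof (rule ccontr)
  assume "\<not> (\<exists>f\<in>F. \<not> dom f \<subseteq> W)"
  then have "f = f |` W" if "f \<in> F" for f
    using that by (force simp: restrict_map_def fun_eq_iff)
  then have "F \<subseteq> (\<lambda>f. f |` W) ` F" by blast
  then have "|F| \<le>o |(\<lambda>f. f |` W) ` F|" by (rule card_of_mono1)
  also have "|(\<lambda>f. f |` W) ` F| \<le>o r"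
    using r exp V small W by (rule card_of_restrictions_ordLeq)
  finally show False using big not_ordLeq_ordLess by blast
qed

(* A member f whose domain is not inside the union W of the chain meets W in fewer than
  mu points, which by regularity lie in one stage B a; the member chosen for the
  restriction of f to the stages below some c > a has its domain inside W, so it differs
  from f, and it agrees with f on their common domain. *)
lemma exists_agreeing_pair:
  fixes F :: "('y \<rightharpoonup> 'v) set" and r :: "'b rel"
  assumes r: "Card_order r" "\<not> finite (Field r)" and exp: "|less_exp_set r| \<le>o r"
    and V: "|UNIV :: 'v set| \<le>o r"
    and small: "\<And>f. f \<in> F \<Longrightarrow> |dom f| <o r" and big: "r <o |F|"
  shows "\<exists>f\<in>F. \<exists>f'\<in>F. f \<noteq> f' \<and> (\<forall>x\<in>dom f \<inter> dom f'. f x = f' x)"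
proof -
  obtain B where chain: "relChain r B" and card_W: "|\<Union>x\<in>Field r. B x| \<le>o r"
    and closed: "\<And>c f. f \<in> F \<Longrightarrow> \<exists>f'\<in>F. dom f' \<subseteq> B c \<and>
      f' |` (\<Union>y\<in>underS r c. B y) = f |` (\<Union>y\<in>underS r c. B y)"
    using exists_restriction_closed_chain[OF r exp V small] by blast
  define W where "W = (\<Union>x\<in>Field r. B x)"
  obtain f where f: "f \<in> F" "\<not> dom f \<subseteq> W"
    using exists_dom_not_subset[OF r exp V small big card_W[folded W_def]] by blast
  have "|dom f \<inter> W| \<le>o |dom f|" by (rule card_of_mono1) blast
  then have "|dom f \<inter> W| <o r" using small[OF f(1)] by (rule ordLeq_ordLess_trans)
  then obtain a where a: "a \<in> Field r" "dom f \<inter> W \<subseteq> B a"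
    using regularCard_UNION[OF r(1) regularCard_if_less_exp[OF r exp] chain] unfolding W_def
    by blast
  obtain c where c: "c \<in> Field r" "a \<noteq> c" "(a, c) \<in> r"
    using infinite_Card_order_limit[OF r a(1)] by blast
  define S where "S = (\<Union>y\<in>underS r c. B y)"
  have "B a \<subseteq> S" unfolding S_def using c unfolding underS_def by blast
  obtain f' where f': "f' \<in> F" "dom f' \<subseteq> B c" "f' |` S = f |` S"
    using closed[OF f(1), of c] unfolding S_def by blast
  have "dom f' \<subseteq> W" unfolding W_def using f'(2) c(1) by blast
  then have "f \<noteq> f'" using f(2) by auto
  moreover have "\<forall>x\<in>dom f \<inter> dom f'. f x = f' x"
  proof
    fix x assume "x \<in> dom f \<inter> dom f'"
    then have "x \<in> S" using \<open>dom f' \<subseteq> W\<close> a(2) \<open>B a \<subseteq> S\<close> by blast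
    have "(f |` S) x = (f' |` S) x" using f'(3) by simp
    with \<open>x \<in> S\<close> show "f x = f' x" by simp
  qed
  ultimately show ?thesis using f(1) f'(1) by blast
qed

lemma finite_UNIV_sym3: "finite (UNIV :: sym3 set)"
proof -
  have UNIV_eq: "(UNIV :: sym3 set) = {Ge, Perp, U}" using sym3.exhaust by blast
  show ?thesis by (subst UNIV_eq) simp
qed

lemma card_of_dom_Pforce:
  assumes rm: "Card_order rm" "\<not> finite (Field rm)" and p: "p \<in> Pforce rl rm"
  shows "|dom p| <o rm"
proof -
  obtain w where w: "|w| <o rm" "valuation rl w p" using p unfolding Pforce_def by blast
  have "dom p \<subseteq> w \<times> w" using valuation_dom[OF w(2)] unfolding pairs2_def by auto
  then have "|dom p| \<le>o |w \<times> w|" by (rule card_of_mono1)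
  also have "|w \<times> w| <o rm"
  proof (cases "finite w")
    case True
    then show ?thesis
      by (intro finite_ordLess_infinite[OF card_of_Well_order card_order_on_well_order_on[OF rm(1)]])
        (simp_all add: Field_card_of rm(2))
  next
    case False
    then have "|w \<times> w| =o |w|" by (rule card_of_Times_same_infinite)
    then show ?thesis using w(1) by (rule ordIso_ordLess_trans)
  qed
  finally show ?thesis .
qed

lemma Pforce_compatible_if_agree:
  assumes rl: "card_order rl" and rm: "Card_order rm" "\<not> finite (Field rm)"
    and p: "p \<in> Pforce rl rm" and q: "q \<in> Pforce rl rm"
    and agree: "\<forall>x\<in>dom p \<inter> dom q. p x = q x"
  shows "compatible (Pforce rl rm) p q"
proof -
  obtain a where a: "a \<subseteq> Field rl" "|a| <o rm" "valuation rl a p"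
    using p unfolding Pforce_def by blast
  obtain b where b: "b \<subseteq> Field rl" "|b| <o rm" "valuation rl b q"
    using q unfolding Pforce_def by blast
  obtain s where s: "valuation rl (a \<union> b) s" "p \<subseteq>\<^sub>m s" "q \<subseteq>\<^sub>m s"
    using agreeing_valuations.common_extension[OF agreeing_valuations.intro[OF rl a(3) b(3) agree]]
    by blast
  have "a \<union> b \<subseteq> Field rl" using a(1) b(1) by blast
  moreover have "|a \<union> b| <o rm" using card_of_Un_ordLess_infinite_Field[OF rm(2,1) a(2) b(2)] .
  ultimately have "s \<in> Pforce rl rm"
    unfolding Pforce_def using s(1) by (intro CollectI exI[of _ "a \<union> b"] conjI)
  then show ?thesis unfolding compatible_def using s(2,3) by blast
qed

theorem proposition4p5:
  fixes rl :: "'a rel" and rm :: "'b rel"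
  assumes "card_order rl" and "card_order rm"
    and "infinite (Field rl)" and "infinite (Field rm)"
    and "(rm, rl) \<in> ordLess"
    and "(card_of (less_exp_set rm), rm) \<in> ordIso"
    and "regularCard rl"
  shows "chain_condition (Pforce rl rm) (cardSuc rm)"
  unfolding chain_condition_def
proof (intro allI impI)
  fix A assume A: "antichain (Pforce rl rm) A"
  have rm: "Card_order rm" using card_order_on_Card_order[OF assms(2)] by blast
  have exp: "|less_exp_set rm| \<le>o rm" using assms(6) by (rule ordIso_imp_ordLeq)
  have sym3: "|UNIV :: sym3 set| \<le>o rm"
    by (intro ordLess_imp_ordLeq
        finite_ordLess_infinite[OF card_of_Well_order card_order_on_well_order_on[OF rm]])
      (simp_all add: Field_card_of assms(4) finite_UNIV_sym3)
  show "|A| <o cardSuc rm"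
  proof (rule ccontr)
    assume "\<not> |A| <o cardSuc rm"
    then have "rm <o |A|"
      by (simp add: cardSuc_ordLess_ordLeq[OF rm card_of_Card_order]
          not_ordLess_iff_ordLeq[OF cardSuc_Well_order[OF rm] card_of_Well_order])
    moreover have "\<And>p. p \<in> A \<Longrightarrow> |dom p| <o rm"
      using A card_of_dom_Pforce[OF rm assms(4)] unfolding antichain_def by blast
    ultimately obtain p q where "p \<in> A" "q \<in> A" "p \<noteq> q" "\<forall>x\<in>dom p \<inter> dom q. p x = q x"
      using exists_agreeing_pair[OF rm assms(4) exp sym3] by blast
    then show False
      using A Pforce_compatible_if_agree[OF assms(1) rm assms(4)] unfolding antichain_def by blast
  qed
qed

end
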